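(* Let a graphical constant-sum game with $m$ agents be given and let $\hat{\mathbf{x}}^*=(\mathbf{x}^*_1,\ldots,\mathbf{x}^*_m)\in\Delta$ be a Nash equilibrium of it. Then for every $t\ge0$ and every function $\hat{\mathbf{x}}:[0,\infty)\to\Delta$ (with $\hat{\mathbf{p}}(\tau)=G(\hat{\mathbf{x}}(\tau))$), $$\int_0^t\langle\hat{\mathbf{x}}(\tau)-\hat{\mathbf{x}}^*,-\hat{\mathbf{p}}(\tau)\rangle\,d\tau\ \ge\ 0,$$ i.e. the game operator with shift $\hat{\mathbf{x}}^*$ is passive via the zero storage function. Moreover, if $\hat{\mathbf{x}}^*$ is fully mixed (every entry positive), then this integral equals $0$ for all such $\hat{\mathbf{x}}$ and $t$, i.e. the game operator with shift $\hat{\mathbf{x}}^*$ is lossless via the zero storage function.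
   Context: Agent $i\in\{1,\ldots,m\}$ has $n_i$ actions; $\Delta^{n}=\{\mathbf{x}\in\mathbb{R}^n:x_j\ge0,\sum_jx_j=1\}$ and $\Delta=\Delta^{n_1}\times\cdots\times\Delta^{n_m}$. A graphical game is given by matrices $\mathbf{A}^{ik}\in\mathbb{R}^{n_i\times n_k}$ for all ordered pairs $i\neq k$; for $\hat{\mathbf{x}}=(\mathbf{x}_1,\ldots,\mathbf{x}_m)\in\Delta$ the payoff vector of agent $i$ is $\mathbf{p}_i=\sum_{k\neq i}\mathbf{A}^{ik}\mathbf{x}_k$, and $G(\hat{\mathbf{x}})=\hat{\mathbf{p}}=(\mathbf{p}_1,\ldots,\mathbf{p}_m)$; agent $i$'s payoff is $\langle\mathbf{x}_i,\mathbf{p}_i\rangle$. It is graphical constant-sum if for every pair $\{i,k\}$ there is a constant $c^{\{i,k\}}$ with $\mathbf{A}^{ik}_{j\ell}+\mathbf{A}^{ki}_{\ell j}=c^{\{i,k\}}$ for all actions $j$ of $i$ and $\ell$ of $k$. A Nash equilibrium is $\hat{\mathbf{x}}^*\in\Delta$ such that for each $i$, $\mathbf{x}^*_i$ maximizes agent $i$'s payoff given the others' strategies $\mathbf{x}^*_k$, $k\neq i$. The game operator with shift $\hat{\mathbf{x}}^*$ has input $\hat{\mathbf{x}}-\hat{\mathbf{x}}^*$ and output $-\hat{\mathbf{p}}$, with no state; passivity via the zero storage function means the displayed integral inequality, losslessness means equality. *)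

theory Defs
  imports "HOL-Analysis.Analysis"
begin

text \<open>Agents are 0..<m; agent i has actions 0..<n i.  A strategy of agent i is a
  function nat => real (only entries j < n i matter); a profile is nat => nat => real.
  The payoff matrices are A i k j l = entry (j,l) of the matrix A^{ik}.\<close>

definition strategy_simplex :: "nat \<Rightarrow> (nat \<Rightarrow> real) \<Rightarrow> bool" where
  "strategy_simplex d v \<longleftrightarrow> (\<forall>j<d. 0 \<le> v j) \<and> (\<Sum>j<d. v j) = 1"

definition profile :: "nat \<Rightarrow> (nat \<Rightarrow> nat) \<Rightarrow> (nat \<Rightarrow> nat \<Rightarrow> real) \<Rightarrow> bool" where
  "profile m n x \<longleftrightarrow> (\<forall>i<m. strategy_simplex (n i) (x i))"

definition payoff_vec ::
  "nat \<Rightarrow> (nat \<Rightarrow> nat) \<Rightarrow> (nat \<Rightarrow> nat \<Rightarrow> nat \<Rightarrow> nat \<Rightarrow> real) \<Rightarrow> (nat \<Rightarrow> nat \<Rightarrow> real)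
     \<Rightarrow> nat \<Rightarrow> nat \<Rightarrow> real" where
  "payoff_vec m n A x i j = (\<Sum>k\<in>{..<m} - {i}. \<Sum>l<n k. A i k j l * x k l)"

definition payoff ::
  "nat \<Rightarrow> (nat \<Rightarrow> nat) \<Rightarrow> (nat \<Rightarrow> nat \<Rightarrow> nat \<Rightarrow> nat \<Rightarrow> real) \<Rightarrow> (nat \<Rightarrow> nat \<Rightarrow> real)
     \<Rightarrow> nat \<Rightarrow> real" where
  "payoff m n A x i = (\<Sum>j<n i. x i j * payoff_vec m n A x i j)"

definition graphical_constant_sum ::
  "nat \<Rightarrow> (nat \<Rightarrow> nat) \<Rightarrow> (nat \<Rightarrow> nat \<Rightarrow> nat \<Rightarrow> nat \<Rightarrow> real) \<Rightarrow> bool" where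
  "graphical_constant_sum m n A \<longleftrightarrow>
     (\<forall>i<m. \<forall>k<m. i \<noteq> k \<longrightarrow>
        (\<exists>c::real. \<forall>j<n i. \<forall>l<n k. A i k j l + A k i l j = c))"

definition nash_equilibrium ::
  "nat \<Rightarrow> (nat \<Rightarrow> nat) \<Rightarrow> (nat \<Rightarrow> nat \<Rightarrow> nat \<Rightarrow> nat \<Rightarrow> real) \<Rightarrow> (nat \<Rightarrow> nat \<Rightarrow> real) \<Rightarrow> bool" where
  "nash_equilibrium m n A xs \<longleftrightarrow> profile m n xs \<and>
     (\<forall>i<m. \<forall>y. strategy_simplex (n i) y \<longrightarrow> payoff m n A (xs(i := y)) i \<le> payoff m n A xs i)"

definition fully_mixed :: "nat \<Rightarrow> (nat \<Rightarrow> nat) \<Rightarrow> (nat \<Rightarrow> nat \<Rightarrow> real) \<Rightarrow> bool" where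
  "fully_mixed m n xs \<longleftrightarrow> (\<forall>i<m. \<forall>j<n i. 0 < xs i j)"

definition supply_rate ::
  "nat \<Rightarrow> (nat \<Rightarrow> nat) \<Rightarrow> (nat \<Rightarrow> nat \<Rightarrow> nat \<Rightarrow> nat \<Rightarrow> real) \<Rightarrow> (nat \<Rightarrow> nat \<Rightarrow> real)
     \<Rightarrow> (nat \<Rightarrow> nat \<Rightarrow> real) \<Rightarrow> real" where
  "supply_rate m n A xs x = (\<Sum>i<m. \<Sum>j<n i. (x i j - xs i j) * (- payoff_vec m n A x i j))"

end

theory Submission
  imports Defs
begin

text \<open>Write \<open>B(u, v) = \<langle>u, G(v)\<rangle>\<close>. In a graphical constant-sum game every pairwise
  interaction sums to a constant on mixed strategies, so \<open>B(u, v) + B(v, u)\<close> does not depend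
  on the profiles \<open>u, v\<close>. Comparing the pairs \<open>(x, x)\<close>, \<open>(x\<^sup>*, x)\<close> and \<open>(x\<^sup>*, x\<^sup>*)\<close> turns the
  supply rate \<open>B(x\<^sup>*, x) - B(x, x)\<close> into \<open>B(x\<^sup>*, x\<^sup>*) - B(x, x\<^sup>*)\<close>, the total gain of the
  agents at the equilibrium over the unilateral deviations to \<open>x\<^sub>i\<close>; it is nonnegative by the
  Nash property. If \<open>x\<^sup>*\<close> is fully mixed, every agent is indifferent between all of its
  actions, so each gain vanishes. Pointwise bounds on the integrand then bound the integral.\<close>

definition game_pairing ::
  "nat \<Rightarrow> (nat \<Rightarrow> nat) \<Rightarrow> (nat \<Rightarrow> nat \<Rightarrow> nat \<Rightarrow> nat \<Rightarrow> real) \<Rightarrow> (nat \<Rightarrow> nat \<Rightarrow> real)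
     \<Rightarrow> (nat \<Rightarrow> nat \<Rightarrow> real) \<Rightarrow> real" where
  "game_pairing m n A u v = (\<Sum>i<m. \<Sum>j<n i. u i j * payoff_vec m n A v i j)"

lemma strategy_simplex_pure: "j < d \<Longrightarrow> strategy_simplex d (\<lambda>l. of_bool (l = j))"
  by (simp add: strategy_simplex_def)

lemma sum_simplex_const:
  "strategy_simplex d v \<Longrightarrow> (\<Sum>j<d. v j * c) = c"
  by (simp add: strategy_simplex_def flip: sum_distrib_right)

lemma constant_sum_bimatrix_expected_payoff:
  assumes "\<forall>j<a. \<forall>l<b. M j l + N l j = c"
    and "strategy_simplex a u" and "strategy_simplex b v"
  shows "(\<Sum>j<a. \<Sum>l<b. (M j l + N l j) * u j * v l) = c"
proof -
  have "(\<Sum>j<a. \<Sum>l<b. (M j l + N l j) * u j * v l) = (\<Sum>j<a. u j * (\<Sum>l<b. v l * c))"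
    using assms(1) by (simp add: sum_distrib_left mult_ac)
  also have "\<dots> = c"
    using assms(2,3) by (simp add: sum_simplex_const)
  finally show ?thesis .
qed

lemma simplex_average_eq_if_dominates:
  assumes v: "strategy_simplex d v"
    and le: "\<forall>j<d. p j \<le> (\<Sum>l<d. v l * p l)"
    and "j0 < d" and "0 < v j0"
  shows "p j0 = (\<Sum>l<d. v l * p l)"
proof -
  define V where "V = (\<Sum>l<d. v l * p l)"
  have "(\<Sum>j<d. v j * (V - p j)) = V - V"
    using v by (simp add: right_diff_distrib sum_subtractf sum_simplex_const V_def)
  then have "(\<Sum>j<d. v j * (V - p j)) = 0" by simp
  moreover have "\<forall>j\<in>{..<d}. 0 \<le> v j * (V - p j)"
    using v le by (auto simp: strategy_simplex_def V_def)
  ultimately have "v j0 * (V - p j0) = 0"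
    using \<open>j0 < d\<close> sum_nonneg_eq_0_iff[of "{..<d}" "\<lambda>j. v j * (V - p j)"] by simp
  with \<open>0 < v j0\<close> show ?thesis by (simp add: V_def)
qed

lemma sum_off_diagonal_swap:
  fixes f :: "nat \<Rightarrow> nat \<Rightarrow> 'a::comm_monoid_add"
  shows "(\<Sum>i<m. \<Sum>k\<in>{..<m} - {i}. f i k) = (\<Sum>i<m. \<Sum>k\<in>{..<m} - {i}. f k i)"
proof -
  have "\<And>i. {..<m} - {i} = {k. k \<in> {..<m} \<and> i \<noteq> k}"
    and "\<And>k. {..<m} - {k} = {i. i \<in> {..<m} \<and> i \<noteq> k}" by auto
  then show ?thesis
    using sum.swap_restrict[of "{..<m}" "{..<m}" f "\<lambda>i k. i \<noteq> k"] by simp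
qed

lemma game_pairing_off_diagonal:
  "game_pairing m n A u v =
     (\<Sum>i<m. \<Sum>k\<in>{..<m} - {i}. \<Sum>j<n i. \<Sum>l<n k. A i k j l * u i j * v k l)"
  unfolding game_pairing_def payoff_vec_def
  by (simp add: sum_distrib_left mult_ac sum.swap[of _ "{..<n _}" "{..<_} - _"])

lemma graphical_constant_sum_constants:
  assumes "graphical_constant_sum m n A"
  shows "\<exists>c. \<forall>i<m. \<forall>k<m. i \<noteq> k \<longrightarrow> (\<forall>j<n i. \<forall>l<n k. A i k j l + A k i l j = c i k)"
  using assms unfolding graphical_constant_sum_def by metis

lemma game_pairing_add_swap:
  assumes c: "\<forall>i<m. \<forall>k<m. i \<noteq> k \<longrightarrow> (\<forall>j<n i. \<forall>l<n k. A i k j l + A k i l j = c i k)"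
    and u: "profile m n u" and v: "profile m n v"
  shows "game_pairing m n A u v + game_pairing m n A v u = (\<Sum>i<m. \<Sum>k\<in>{..<m} - {i}. c i k)"
proof -
  have "game_pairing m n A v u =
      (\<Sum>i<m. \<Sum>k\<in>{..<m} - {i}. \<Sum>j<n i. \<Sum>l<n k. A k i l j * u i j * v k l)"
    unfolding game_pairing_off_diagonal
    by (subst sum_off_diagonal_swap, intro sum.cong[OF refl]) (subst sum.swap, simp add: mult_ac)
  then have "game_pairing m n A u v + game_pairing m n A v u =
      (\<Sum>i<m. \<Sum>k\<in>{..<m} - {i}. \<Sum>j<n i. \<Sum>l<n k. (A i k j l + A k i l j) * u i j * v k l)"
    by (simp add: game_pairing_off_diagonal distrib_right flip: sum.distrib)
  also have "\<dots> = (\<Sum>i<m. \<Sum>k\<in>{..<m} - {i}. c i k)"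
    using c u v unfolding profile_def
    by (intro sum.cong refl constant_sum_bimatrix_expected_payoff) auto
  finally show ?thesis .
qed

lemma game_pairing_add_swap_invariant:
  assumes "graphical_constant_sum m n A"
    and "profile m n u" "profile m n v" "profile m n u'" "profile m n v'"
  shows "game_pairing m n A u v + game_pairing m n A v u
       = game_pairing m n A u' v' + game_pairing m n A v' u'"
proof -
  obtain c where "\<forall>i<m. \<forall>k<m. i \<noteq> k \<longrightarrow> (\<forall>j<n i. \<forall>l<n k. A i k j l + A k i l j = c i k)"
    using graphical_constant_sum_constants[OF assms(1)] by blast
  note add_swap = game_pairing_add_swap[OF this]
  show ?thesis
    using add_swap[OF assms(2,3)] add_swap[OF assms(4,5)] by simp
qed

lemma supply_rate_eq_deviation_gains:
  assumes "graphical_constant_sum m n A" and xs: "profile m n xs" and x: "profile m n x"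
  shows "supply_rate m n A xs x =
    (\<Sum>i<m. payoff m n A xs i - (\<Sum>j<n i. x i j * payoff_vec m n A xs i j))"
proof -
  have "supply_rate m n A xs x = game_pairing m n A xs x - game_pairing m n A x x"
    unfolding supply_rate_def game_pairing_def
    by (simp add: algebra_simps flip: sum_subtractf)
  moreover have "game_pairing m n A x x + game_pairing m n A x x
      = game_pairing m n A xs xs + game_pairing m n A xs xs"
    and "game_pairing m n A xs x + game_pairing m n A x xs
      = game_pairing m n A xs xs + game_pairing m n A xs xs"
    using game_pairing_add_swap_invariant[OF assms(1) x x xs xs]
      game_pairing_add_swap_invariant[OF assms(1) xs x xs xs] by simp_all
  ultimately have "supply_rate m n A xs x = game_pairing m n A xs xs - game_pairing m n A x xs"
    by linarith
  then show ?thesis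
    by (simp add: game_pairing_def payoff_def sum_subtractf)
qed

lemma payoff_vec_fun_upd_self: "payoff_vec m n A (x(i := y)) i = payoff_vec m n A x i"
  unfolding payoff_vec_def by (intro ext sum.cong) auto

lemma nash_equilibrium_deviation_le:
  assumes "nash_equilibrium m n A xs" and "i < m" and "strategy_simplex (n i) y"
  shows "(\<Sum>j<n i. y j * payoff_vec m n A xs i j) \<le> payoff m n A xs i"
  using assms unfolding nash_equilibrium_def payoff_def payoff_vec_fun_upd_self by force

lemma nash_equilibrium_pure_le:
  assumes "nash_equilibrium m n A xs" and "i < m" and "j < n i"
  shows "payoff_vec m n A xs i j \<le> payoff m n A xs i"
  using nash_equilibrium_deviation_le[OF assms(1,2) strategy_simplex_pure[OF assms(3)]] assms(3)
  by simp

lemma nash_equilibrium_fully_mixed_indifferent: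
  assumes ne: "nash_equilibrium m n A xs" and "fully_mixed m n xs" and "i < m" and "j < n i"
  shows "payoff_vec m n A xs i j = payoff m n A xs i"
proof -
  have "strategy_simplex (n i) (xs i)"
    using ne \<open>i < m\<close> by (simp add: nash_equilibrium_def profile_def)
  moreover have "0 < xs i j"
    using assms(2-) by (simp add: fully_mixed_def)
  ultimately show ?thesis
    using nash_equilibrium_pure_le[OF ne \<open>i < m\<close>] \<open>j < n i\<close>
    unfolding payoff_def by (blast intro: simplex_average_eq_if_dominates)
qed

lemma supply_rate_nonneg:
  assumes "graphical_constant_sum m n A" and ne: "nash_equilibrium m n A xs"
    and x: "profile m n x"
  shows "0 \<le> supply_rate m n A xs x"
  using assms nash_equilibrium_deviation_le[OF ne] x
  by (auto simp: supply_rate_eq_deviation_gains nash_equilibrium_def profile_def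
      intro!: sum_nonneg)

lemma supply_rate_fully_mixed_eq_0:
  assumes "graphical_constant_sum m n A" and ne: "nash_equilibrium m n A xs"
    and fm: "fully_mixed m n xs" and x: "profile m n x"
  shows "supply_rate m n A xs x = 0"
proof -
  have "(\<Sum>j<n i. x i j * payoff_vec m n A xs i j) = payoff m n A xs i" if "i < m" for i
  proof -
    have "(\<Sum>j<n i. x i j * payoff_vec m n A xs i j) = (\<Sum>j<n i. x i j * payoff m n A xs i)"
      using nash_equilibrium_fully_mixed_indifferent[OF ne fm that] by simp
    also have "\<dots> = payoff m n A xs i"
      using that x by (simp add: profile_def sum_simplex_const)
    finally show ?thesis .
  qed
  then show ?thesis
    using assms by (simp add: supply_rate_eq_deviation_gains nash_equilibrium_def)
qed

theorem proposition6p1: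
  fixes m :: nat and n :: "nat \<Rightarrow> nat"
    and A :: "nat \<Rightarrow> nat \<Rightarrow> nat \<Rightarrow> nat \<Rightarrow> real"
    and xs :: "nat \<Rightarrow> nat \<Rightarrow> real"
  assumes "graphical_constant_sum m n A"
    and "nash_equilibrium m n A xs"
  shows "(\<forall>(X :: real \<Rightarrow> nat \<Rightarrow> nat \<Rightarrow> real) t. 0 \<le> t \<and> (\<forall>\<tau>\<ge>0. profile m n (X \<tau>)) \<longrightarrow>
            0 \<le> integral {0..t} (\<lambda>\<tau>. supply_rate m n A xs (X \<tau>)))
       \<and> (fully_mixed m n xs \<longrightarrow>
          (\<forall>(X :: real \<Rightarrow> nat \<Rightarrow> nat \<Rightarrow> real) t. 0 \<le> t \<and> (\<forall>\<tau>\<ge>0. profile m n (X \<tau>)) \<longrightarrow>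
            integral {0..t} (\<lambda>\<tau>. supply_rate m n A xs (X \<tau>)) = 0))"
proof (intro conjI allI impI)
  fix X :: "real \<Rightarrow> nat \<Rightarrow> nat \<Rightarrow> real" and t :: real
  assume "0 \<le> t \<and> (\<forall>\<tau>\<ge>0. profile m n (X \<tau>))"
  then have "\<forall>\<tau>\<in>{0..t}. 0 \<le> supply_rate m n A xs (X \<tau>)"
    using supply_rate_nonneg[OF assms] by simp
  \<comment> \<open>a non-integrable integrand has integral 0 by convention\<close>
  then show "0 \<le> integral {0..t} (\<lambda>\<tau>. supply_rate m n A xs (X \<tau>))"
    by (cases "(\<lambda>\<tau>. supply_rate m n A xs (X \<tau>)) integrable_on {0..t}")
      (auto intro: integral_nonneg simp: not_integrable_integral)
next
  fix X :: "real \<Rightarrow> nat \<Rightarrow> nat \<Rightarrow> real" and t :: real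
  assume "fully_mixed m n xs" and "0 \<le> t \<and> (\<forall>\<tau>\<ge>0. profile m n (X \<tau>))"
  then have "\<forall>\<tau>\<in>{0..t}. supply_rate m n A xs (X \<tau>) = 0"
    using supply_rate_fully_mixed_eq_0[OF assms] by simp
  then have "integral {0..t} (\<lambda>\<tau>. supply_rate m n A xs (X \<tau>)) = integral {0..t} (\<lambda>_. 0)"
    by (intro integral_cong) simp
  then show "integral {0..t} (\<lambda>\<tau>. supply_rate m n A xs (X \<tau>)) = 0"
    by simp
qed

end
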